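(* A cluster transformation $\mathbf K:\mathbf q\to\mathbf q$ is a cluster Donaldson–Thomas transformation of $\mathbf q$ if and only if $F(\mathbf K):-\mathbf q\to-\mathbf q$ is a cluster Donaldson–Thomas transformation of $-\mathbf q$.
   Context: For a quiver $\mathbf q$ with exchange matrix $\varepsilon$, $-\mathbf q$ is the quiver with matrix $-\varepsilon$ (all arrows reversed). A cluster transformation $\sigma:\mathbf q\to\mathbf q'$ is a finite sequence of mutations $\mu_k$ and relabelings; $I(\sigma):-\mathbf q\to-\mathbf q'$ is the same sequence applied to $-\mathbf q$, and $F(\sigma):=I(\sigma^{-1}):-\mathbf q'\to-\mathbf q$, where $\sigma^{-1}$ is the reverse sequence. Tropical coordinates of a quiver with vertex set $I$ are $\mathbb Z^I$; mutation acts by $x'_k=-x_k$, $x'_i=x_i-\varepsilon_{ik}\min\{0,-\mathrm{sgn}(\varepsilon_{ik})x_k\}$, relabeling by permuting coordinates. The $C$-matrix $C_\sigma$ has $j$-th column the image of the $j$-th unit vector (basic positive lamination $l^+_{\mathbf q,j}$) under the tropicalized map of $\sigma$. A cluster Donaldson–Thomas transformation of $\mathbf q$ is a cluster transformation $\mathbf K:\mathbf q\to\mathbf q$ with $C_{\mathbf K}=-\mathrm{Id}$. *)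

theory Defs
  imports Main
begin

text \<open>A quiver on the finite vertex type 'i is given by its exchange matrix
  eps :: 'i => 'i => int, required to be skew-symmetric.\<close>

type_synonym 'i exmat = "'i \<Rightarrow> 'i \<Rightarrow> int"

definition skew_symmetric :: "'i exmat \<Rightarrow> bool" where
  "skew_symmetric eps \<longleftrightarrow> (\<forall>i j. eps i j = - eps j i)"

definition neg_quiver :: "'i exmat \<Rightarrow> 'i exmat" where
  "neg_quiver eps = (\<lambda>i j. - eps i j)"

text \<open>Elementary steps of a cluster transformation: a mutation at a vertex,
  or a relabeling by a permutation pi (vertex i is renamed pi i).\<close>
datatype 'i step = Mut 'i | Rel "'i \<Rightarrow> 'i"

definition wf_steps :: "'i step list \<Rightarrow> bool" where
  "wf_steps s \<longleftrightarrow> (\<forall>pi. Rel pi \<in> set s \<longrightarrow> bij pi)"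

definition mut_mat :: "'i \<Rightarrow> 'i exmat \<Rightarrow> 'i exmat" where
  "mut_mat k eps = (\<lambda>i j. if i = k \<or> j = k then - eps i j
      else eps i j + (\<bar>eps i k\<bar> * eps k j + eps i k * \<bar>eps k j\<bar>) div 2)"

definition rel_mat :: "('i \<Rightarrow> 'i) \<Rightarrow> 'i exmat \<Rightarrow> 'i exmat" where
  "rel_mat pi eps = (\<lambda>a b. eps (inv pi a) (inv pi b))"

definition step_mat :: "'i step \<Rightarrow> 'i exmat \<Rightarrow> 'i exmat" where
  "step_mat st eps = (case st of Mut k \<Rightarrow> mut_mat k eps | Rel pi \<Rightarrow> rel_mat pi eps)"

fun target :: "'i exmat \<Rightarrow> 'i step list \<Rightarrow> 'i exmat" where
  "target eps [] = eps"
| "target eps (st # s) = target (step_mat st eps) s"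

definition cluster_transf :: "'i exmat \<Rightarrow> 'i step list \<Rightarrow> 'i exmat \<Rightarrow> bool" where
  "cluster_transf eps s eps' \<longleftrightarrow> wf_steps s \<and> target eps s = eps'"

definition trop_mut :: "'i exmat \<Rightarrow> 'i \<Rightarrow> ('i \<Rightarrow> int) \<Rightarrow> ('i \<Rightarrow> int)" where
  "trop_mut eps k x = (\<lambda>i. if i = k then - x k
      else x i - eps i k * min 0 (- sgn (eps i k) * x k))"

definition trop_relabel :: "('i \<Rightarrow> 'i) \<Rightarrow> ('i \<Rightarrow> int) \<Rightarrow> ('i \<Rightarrow> int)" where
  "trop_relabel pi x = (\<lambda>a. x (inv pi a))"

fun trop_map :: "'i exmat \<Rightarrow> 'i step list \<Rightarrow> ('i \<Rightarrow> int) \<Rightarrow> ('i \<Rightarrow> int)" where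
  "trop_map eps [] x = x"
| "trop_map eps (Mut k # s) x = trop_map (mut_mat k eps) s (trop_mut eps k x)"
| "trop_map eps (Rel pi # s) x = trop_map (rel_mat pi eps) s (trop_relabel pi x)"

definition unit_vec :: "'i \<Rightarrow> ('i \<Rightarrow> int)" where
  "unit_vec j = (\<lambda>i. if i = j then 1 else 0)"

definition C_matrix :: "'i exmat \<Rightarrow> 'i step list \<Rightarrow> 'i \<Rightarrow> 'i \<Rightarrow> int" where
  "C_matrix eps s = (\<lambda>i j. trop_map eps s (unit_vec j) i)"

definition inv_step :: "'i step \<Rightarrow> 'i step" where
  "inv_step st = (case st of Mut k \<Rightarrow> Mut k | Rel pi \<Rightarrow> Rel (inv pi))"

definition inv_steps :: "'i step list \<Rightarrow> 'i step list" where
  "inv_steps s = rev (map inv_step s)"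

text \<open>F(sigma) := I(sigma^{-1}); as a step sequence it is sigma^{-1}, to be
  applied to the negated quiver.\<close>
definition F_transf :: "'i step list \<Rightarrow> 'i step list" where
  "F_transf s = inv_steps s"

definition cluster_DT :: "'i exmat \<Rightarrow> 'i step list \<Rightarrow> bool" where
  "cluster_DT eps K \<longleftrightarrow> cluster_transf eps K eps \<and>
     C_matrix eps K = (\<lambda>i j. if i = j then -1 else 0)"

end

theory Submission
  imports Defs
begin

text \<open>Reversing all arrows commutes with mutation and relabeling, and on tropical
  points it amounts to conjugation by x \<mapsto> -x. So if T is the tropical map of K on q
  and G that of its inverse sequence, the tropical map of F(K) on -q is x \<mapsto> -G(-x).
  Hence F(K) sends every unit vector e_j to -e_j iff G(-e_j) = e_j, which, since G
  inverts T, happens iff T(e_j) = -e_j.\<close>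

lemma even_abs_mult_add_mult_abs: "even (\<bar>a\<bar> * b + a * \<bar>b\<bar> :: int)"
  by (cases "a \<ge> 0"; cases "b \<ge> 0") (simp_all add: abs_of_nonneg abs_of_neg)

lemma mutation_term_uminus:
  "(- (\<bar>a\<bar> * b) - a * \<bar>b\<bar>) div 2 = - ((\<bar>a\<bar> * b + a * \<bar>b\<bar>) div (2::int))"
proof -
  have "(\<bar>a\<bar> * b + a * \<bar>b\<bar>) mod 2 = 0"
    using even_abs_mult_add_mult_abs by (simp add: even_iff_mod_2_eq_zero)
  then show ?thesis
    using zdiv_zminus1_eq_if[of 2 "\<bar>a\<bar> * b + a * \<bar>b\<bar>"] by simp
qed

lemma mut_mat_involutive: "mut_mat k (mut_mat k eps) = eps"
  by (auto simp: fun_eq_iff mut_mat_def mutation_term_uminus)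

lemma mut_mat_neg_quiver: "mut_mat k (neg_quiver eps) = neg_quiver (mut_mat k eps)"
  by (auto simp: fun_eq_iff mut_mat_def neg_quiver_def mutation_term_uminus)

lemma rel_mat_neg_quiver: "rel_mat pi (neg_quiver eps) = neg_quiver (rel_mat pi eps)"
  by (simp add: rel_mat_def neg_quiver_def)

lemma step_mat_neg_quiver: "step_mat st (neg_quiver eps) = neg_quiver (step_mat st eps)"
  by (cases st) (simp_all add: step_mat_def mut_mat_neg_quiver rel_mat_neg_quiver)

lemma target_neg_quiver: "target (neg_quiver eps) s = neg_quiver (target eps s)"
  by (induction s arbitrary: eps) (auto simp: step_mat_neg_quiver)

lemma target_append: "target eps (s @ t) = target (target eps s) t"
  by (induction s arbitrary: eps) auto

lemma trop_map_append:
  "trop_map eps (s @ t) x = trop_map (target eps s) t (trop_map eps s x)"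
proof (induction s arbitrary: eps x)
  case (Cons st s)
  then show ?case by (cases st) (auto simp: step_mat_def)
qed simp

lemma uminus_uminus_fun: "- (- f) = (f :: 'a \<Rightarrow> 'b::group_add)"
  by (simp add: fun_eq_iff)

lemma uminus_fun_eq_iff: "- f = - g \<longleftrightarrow> f = (g :: 'a \<Rightarrow> 'b::group_add)"
  by (metis uminus_uminus_fun)

lemma trop_map_neg_quiver: "trop_map (neg_quiver eps) s x = - trop_map eps s (- x)"
proof (induction s arbitrary: eps x)
  case (Cons st s)
  show ?case
  proof (cases st)
    case (Mut k)
    have "trop_mut (neg_quiver eps) k x = - trop_mut eps k (- x)"
      by (auto simp: fun_eq_iff trop_mut_def neg_quiver_def sgn_if min_def)
    then show ?thesis
      using Cons.IH Mut by (simp add: mut_mat_neg_quiver uminus_uminus_fun del: uminus_apply)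
  next
    case (Rel pi)
    have "trop_relabel pi x = - trop_relabel pi (- x)"
      by (auto simp: fun_eq_iff trop_relabel_def)
    then show ?thesis
      using Cons.IH Rel by (simp add: rel_mat_neg_quiver uminus_uminus_fun del: uminus_apply)
  qed
qed (simp add: uminus_uminus_fun)

lemma wf_steps_ConsD: "wf_steps (st # s) \<Longrightarrow> wf_steps [st] \<and> wf_steps s"
  by (auto simp: wf_steps_def)

lemma inv_steps_Cons: "inv_steps (st # s) = inv_steps s @ [inv_step st]"
  by (simp add: inv_steps_def)

lemma wf_steps_inv_steps: "wf_steps s \<Longrightarrow> wf_steps (inv_steps s)"
  by (auto simp: wf_steps_def inv_steps_def inv_step_def bij_imp_bij_inv split: step.splits)

lemma inv_steps_involutive: "wf_steps s \<Longrightarrow> inv_steps (inv_steps s) = s"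
proof -
  assume "wf_steps s"
  then have "\<forall>st\<in>set s. inv_step (inv_step st) = st"
    by (auto simp: wf_steps_def inv_step_def inv_inv_eq split: step.splits)
  then show ?thesis
    by (simp add: inv_steps_def rev_map map_idI)
qed

lemma target_inv_step:
  assumes "wf_steps [st]"
  shows "target (target eps [st]) [inv_step st] = eps"
proof (cases st)
  case (Rel pi)
  then have "bij pi" using assms by (simp add: wf_steps_def)
  then show ?thesis
    using Rel by (simp add: step_mat_def inv_step_def rel_mat_def inv_inv_eq bij_is_inj)
qed (simp add: step_mat_def inv_step_def mut_mat_involutive)

lemma trop_map_inv_step:
  assumes "wf_steps [st]"
  shows "trop_map (target eps [st]) [inv_step st] (trop_map eps [st] x) = x"
proof (cases st)
  case (Mut k)
  have "trop_mut (mut_mat k eps) k (trop_mut eps k x) = x"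
    by (auto simp: fun_eq_iff trop_mut_def mut_mat_def sgn_if)
  then show ?thesis using Mut by (simp add: step_mat_def inv_step_def)
next
  case (Rel pi)
  then have "bij pi" using assms by (simp add: wf_steps_def)
  then show ?thesis
    using Rel by (simp add: step_mat_def inv_step_def trop_relabel_def inv_inv_eq bij_is_inj)
qed

lemma target_inv_steps: "wf_steps s \<Longrightarrow> target (target eps s) (inv_steps s) = eps"
proof (induction s arbitrary: eps)
  case (Cons st s)
  then show ?case
    using target_inv_step[of st eps] wf_steps_ConsD[OF Cons.prems]
    by (simp add: inv_steps_Cons target_append)
qed (simp add: inv_steps_def)

lemma trop_map_inv_steps:
  "wf_steps s \<Longrightarrow> trop_map (target eps s) (inv_steps s) (trop_map eps s x) = x"
proof (induction s arbitrary: eps x)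
  case (Cons st s)
  then have "wf_steps [st]" and "wf_steps s" by (simp_all add: wf_steps_ConsD)
  let ?eps' = "target eps [st]" and ?x' = "trop_map eps [st] x"
  have "trop_map (target eps (st # s)) (inv_steps (st # s)) (trop_map eps (st # s) x)
      = trop_map (target ?eps' s) (inv_steps s @ [inv_step st]) (trop_map ?eps' s ?x')"
    using trop_map_append[of eps "[st]" s x] by (simp add: inv_steps_Cons)
  also have "\<dots> = trop_map ?eps' [inv_step st] ?x'"
    using Cons.IH[OF \<open>wf_steps s\<close>] target_inv_steps[OF \<open>wf_steps s\<close>]
    by (simp add: trop_map_append)
  also have "\<dots> = x"
    using trop_map_inv_step[OF \<open>wf_steps [st]\<close>] .
  finally show ?case .
qed (simp add: inv_steps_def)

lemma cluster_transf_inv_steps: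
  "cluster_transf eps s eps' \<Longrightarrow> cluster_transf eps' (inv_steps s) eps"
  by (auto simp: cluster_transf_def wf_steps_inv_steps target_inv_steps)

lemma cluster_transf_neg_quiver:
  "cluster_transf eps s eps' \<Longrightarrow> cluster_transf (neg_quiver eps) s (neg_quiver eps')"
  by (simp add: cluster_transf_def target_neg_quiver)

lemma cluster_transf_trop_map_inv_steps:
  assumes "cluster_transf eps s eps'"
  shows "trop_map eps' (inv_steps s) (trop_map eps s x) = x"
    and "trop_map eps s (trop_map eps' (inv_steps s) y) = y"
proof -
  have "wf_steps s" and "target eps s = eps'"
    using assms by (simp_all add: cluster_transf_def)
  then show "trop_map eps' (inv_steps s) (trop_map eps s x) = x"
    using trop_map_inv_steps by metis
  have "wf_steps (inv_steps s)" and "target eps' (inv_steps s) = eps"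
    using cluster_transf_inv_steps[OF assms] by (simp_all add: cluster_transf_def)
  then show "trop_map eps s (trop_map eps' (inv_steps s) y) = y"
    using trop_map_inv_steps[of "inv_steps s" eps' y] inv_steps_involutive[OF \<open>wf_steps s\<close>]
    by simp
qed

lemma C_matrix_eq_neg_id_iff:
  "C_matrix eps s = (\<lambda>i j. if i = j then -1 else 0)
    \<longleftrightarrow> (\<forall>j. trop_map eps s (unit_vec j) = - unit_vec j)"
  by (auto simp: C_matrix_def unit_vec_def fun_eq_iff)

theorem mainTheorem10:
  fixes eps :: "('i::finite) exmat" and K :: "'i step list"
  assumes "skew_symmetric eps"
    and "cluster_transf eps K eps"
  shows "cluster_DT eps K \<longleftrightarrow> cluster_DT (neg_quiver eps) (F_transf K)"
proof -
  let ?T = "trop_map eps K" and ?G = "trop_map eps (inv_steps K)"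
  have F_transf: "cluster_transf (neg_quiver eps) (F_transf K) (neg_quiver eps)"
    using cluster_transf_neg_quiver[OF cluster_transf_inv_steps[OF assms(2)]]
    by (simp add: F_transf_def)
  have "C_matrix (neg_quiver eps) (F_transf K) = (\<lambda>i j. if i = j then -1 else 0)
      \<longleftrightarrow> (\<forall>j. ?G (- unit_vec j) = unit_vec j)"
    by (simp add: C_matrix_eq_neg_id_iff F_transf_def trop_map_neg_quiver uminus_fun_eq_iff)
  also have "\<dots> \<longleftrightarrow> (\<forall>j. ?T (unit_vec j) = - unit_vec j)"
    using cluster_transf_trop_map_inv_steps[OF assms(2)] by metis
  also have "\<dots> \<longleftrightarrow> C_matrix eps K = (\<lambda>i j. if i = j then -1 else 0)"
    by (simp add: C_matrix_eq_neg_id_iff)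
  finally show ?thesis
    using F_transf assms(2) by (auto simp: cluster_DT_def)
qed

end
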